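(* Let $\{1,\mu_1,\mu_2,\mu_3\}$ be a quaternion basis ($\mu_1,\mu_2$ orthogonal pure unit quaternions, $\mu_3=\mu_1\mu_2$), and let $q=z_1+z_2\mu_2$ with $z_1,z_2$ random variables in $\mathbb{C}_{\mu_1}$ be a centered quaternion Gaussian random variable which is $(\mu_1,1)$-proper, i.e. $q\stackrel{d}{=}\mu_1 q$. Let ${\bf q}_{\mathbb{C}}=[z_1,z_1^{\star},z_2,z_2^{\star}]^T$. Then $$\mathbb{E}[{\bf q}_{\mathbb{C}}{\bf q}_{\mathbb{C}}^{\dagger}]=\begin{bmatrix}\sigma^2 & 0 & \omega & 0\\ 0 & \sigma^2 & 0 & \omega^{\star}\\ \omega^{\star} & 0 & \varsigma^2 & 0\\ 0 & \omega & 0 & \varsigma^2\end{bmatrix},$$ where $\sigma^2=\mathbb{E}[|z_1|^2]\in\mathbb{R}$, $\varsigma^2=\mathbb{E}[|z_2|^2]\in\mathbb{R}$ and $\omega=\mathbb{E}[z_1z_2^{\star}]\in\mathbb{C}_{\mu_1}$.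
   Context: $\mathbb{H}$ denotes the quaternions; $\mathbb{C}_{\mu_1}=\mathbb{R}\oplus\mu_1\mathbb{R}$ is the commutative subfield isomorphic to $\mathbb{C}$; $^{\star}$ denotes conjugation and $\dagger$ conjugate transpose. A quaternion Gaussian random variable is one whose four real components are jointly Gaussian; centered means $\mathbb{E}[q]=0$. $\stackrel{d}{=}$ denotes equality in distribution. *)

theory Defs
  imports "HOL-Probability.Probability"
begin

datatype quat = Quat (qre: real) (qi: real) (qj: real) (qk: real)

definition qadd :: "quat \<Rightarrow> quat \<Rightarrow> quat" where
  "qadd p q = Quat (qre p + qre q) (qi p + qi q) (qj p + qj q) (qk p + qk q)"

definition qscale :: "real \<Rightarrow> quat \<Rightarrow> quat" where
  "qscale r q = Quat (r * qre q) (r * qi q) (r * qj q) (r * qk q)"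

definition qmult :: "quat \<Rightarrow> quat \<Rightarrow> quat" where
  "qmult p q = Quat
     (qre p * qre q - qi p * qi q - qj p * qj q - qk p * qk q)
     (qre p * qi q + qi p * qre q + qj p * qk q - qk p * qj q)
     (qre p * qj q - qi p * qk q + qj p * qre q + qk p * qi q)
     (qre p * qk q + qi p * qj q - qj p * qi q + qk p * qre q)"

definition qone :: quat where "qone = Quat 1 0 0 0"

definition pure_unit :: "quat \<Rightarrow> bool" where
  "pure_unit q \<longleftrightarrow> qre q = 0 \<and> (qi q)\<^sup>2 + (qj q)\<^sup>2 + (qk q)\<^sup>2 = 1"

definition q_orth :: "quat \<Rightarrow> quat \<Rightarrow> bool" where
  "q_orth p q \<longleftrightarrow> qre p * qre q + qi p * qi q + qj p * qj q + qk p * qk q = 0"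

text \<open>Embedding of the commutative subfield C_mu1 = R + mu1 R (isomorphic to C):
  the complex number a + i b corresponds to the quaternion a + b mu1.\<close>
definition cemb :: "quat \<Rightarrow> complex \<Rightarrow> quat" where
  "cemb \<mu>1 z = qadd (qscale (Re z) qone) (qscale (Im z) \<mu>1)"

definition qvec :: "quat \<Rightarrow> real \<times> real \<times> real \<times> real" where
  "qvec q = (qre q, qi q, qj q, qk q)"

definition real_gaussian :: "'a measure \<Rightarrow> ('a \<Rightarrow> real) \<Rightarrow> bool" where
  "real_gaussian M X \<longleftrightarrow> X \<in> borel_measurable M \<and>
     ((\<exists>m. AE x in M. X x = m) \<or>
      (\<exists>m s. s > 0 \<and> distributed M lborel X (normal_density m s)))"

text \<open>Quaternion Gaussian: the four real components are jointly Gaussian, i.e. every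
  real linear combination of them is Gaussian.\<close>
definition quat_gaussian :: "'a measure \<Rightarrow> ('a \<Rightarrow> quat) \<Rightarrow> bool" where
  "quat_gaussian M q \<longleftrightarrow> (\<lambda>x. qvec (q x)) \<in> borel_measurable M \<and>
     (\<forall>a b c d. real_gaussian M (\<lambda>x. a * qre (q x) + b * qi (q x) + c * qj (q x) + d * qk (q x)))"

definition quat_centered :: "'a measure \<Rightarrow> ('a \<Rightarrow> quat) \<Rightarrow> bool" where
  "quat_centered M q \<longleftrightarrow>
     (\<integral>x. qre (q x) \<partial>M) = 0 \<and> (\<integral>x. qi (q x) \<partial>M) = 0 \<and>
     (\<integral>x. qj (q x) \<partial>M) = 0 \<and> (\<integral>x. qk (q x) \<partial>M) = 0"

definition proper_mu1 :: "'a measure \<Rightarrow> quat \<Rightarrow> ('a \<Rightarrow> quat) \<Rightarrow> bool" where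
  "proper_mu1 M \<mu>1 q \<longleftrightarrow>
     distr M borel (\<lambda>x. qvec (q x)) = distr M borel (\<lambda>x. qvec (qmult \<mu>1 (q x)))"

end

theory Submission
  imports Defs
begin

text \<open>Left multiplication by \<open>\<mu>1\<close> multiplies both \<open>\<complex>\<^sub>\<mu>\<^sub>1\<close>-components of
  \<open>q = z1 + z2 \<mu>2\<close> by \<open>\<i>\<close>. Properness therefore says that \<open>(z1, z2)\<close> and
  \<open>(\<i> z1, \<i> z2)\<close> have the same law, so every pseudo-moment \<open>E[z\<^sub>a z\<^sub>b]\<close> equals its own
  negative and vanishes. The remaining entries of the augmented covariance are \<open>\<sigma>\<^sup>2\<close>,
  \<open>\<zeta>\<^sup>2\<close>, \<open>\<omega>\<close> or their conjugates.\<close>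

definition qinner :: "quat \<Rightarrow> quat \<Rightarrow> real" where
  "qinner p m = qre p * qre m + qi p * qi m + qj p * qj m + qk p * qk m"

text \<open>Inverse of \<open>(a, b) \<mapsto> a + b \<mu>2\<close> on \<open>\<complex>\<^sub>\<mu>\<^sub>1 \<times> \<complex>\<^sub>\<mu>\<^sub>1\<close>, read off
  via the orthonormal basis \<open>1, \<mu>1, \<mu>2, \<mu>1 \<mu>2\<close>.\<close>
definition cd_fst :: "quat \<Rightarrow> quat \<Rightarrow> complex" where
  "cd_fst \<mu>1 p = Complex (qre p) (qinner p \<mu>1)"
definition cd_snd :: "quat \<Rightarrow> quat \<Rightarrow> quat \<Rightarrow> complex" where
  "cd_snd \<mu>1 \<mu>2 p = Complex (qinner p \<mu>2) (qinner p (qmult \<mu>1 \<mu>2))"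

lemma cd_fst_qmult:
  assumes "pure_unit \<mu>1"
  shows "cd_fst \<mu>1 (qmult \<mu>1 p) = \<i> * cd_fst \<mu>1 p"
proof -
  obtain a0 a1 a2 a3 where \<mu>1: "\<mu>1 = Quat a0 a1 a2 a3" by (cases \<mu>1)
  with assms have "a0 = 0" "a1\<^sup>2 + a2\<^sup>2 + a3\<^sup>2 = 1" by (simp_all add: pure_unit_def)
  then show ?thesis
    by (simp add: \<mu>1 cd_fst_def qinner_def qmult_def complex_eq_iff) algebra
qed

lemma cd_snd_qmult:
  assumes "pure_unit \<mu>1" "qre \<mu>2 = 0" "q_orth \<mu>1 \<mu>2"
  shows "cd_snd \<mu>1 \<mu>2 (qmult \<mu>1 p) = \<i> * cd_snd \<mu>1 \<mu>2 p"
proof -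
  obtain a0 a1 a2 a3 where \<mu>1: "\<mu>1 = Quat a0 a1 a2 a3" by (cases \<mu>1)
  obtain b0 b1 b2 b3 where \<mu>2: "\<mu>2 = Quat b0 b1 b2 b3" by (cases \<mu>2)
  from assms have "a0 = 0" "b0 = 0" "a1\<^sup>2 + a2\<^sup>2 + a3\<^sup>2 = 1" "a1 * b1 + a2 * b2 + a3 * b3 = 0"
    by (simp_all add: \<mu>1 \<mu>2 pure_unit_def q_orth_def)
  then show ?thesis
    by (simp add: \<mu>1 \<mu>2 cd_snd_def qinner_def qmult_def complex_eq_iff) algebra
qed

lemma cd_fst_cemb:
  assumes "pure_unit \<mu>1" "pure_unit \<mu>2" "q_orth \<mu>1 \<mu>2"
  shows "cd_fst \<mu>1 (qadd (cemb \<mu>1 a) (qmult (cemb \<mu>1 b) \<mu>2)) = a"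
proof -
  obtain a0 a1 a2 a3 where \<mu>1: "\<mu>1 = Quat a0 a1 a2 a3" by (cases \<mu>1)
  obtain b0 b1 b2 b3 where \<mu>2: "\<mu>2 = Quat b0 b1 b2 b3" by (cases \<mu>2)
  from assms have "a0 = 0" "b0 = 0" "a1\<^sup>2 + a2\<^sup>2 + a3\<^sup>2 = 1" "a1 * b1 + a2 * b2 + a3 * b3 = 0"
    by (simp_all add: \<mu>1 \<mu>2 pure_unit_def q_orth_def)
  then show ?thesis
    by (simp add: \<mu>1 \<mu>2 cd_fst_def qinner_def qadd_def qmult_def cemb_def qscale_def qone_def
        complex_eq_iff) algebra
qed

lemma cd_snd_cemb:
  assumes "pure_unit \<mu>1" "pure_unit \<mu>2" "q_orth \<mu>1 \<mu>2"
  shows "cd_snd \<mu>1 \<mu>2 (qadd (cemb \<mu>1 a) (qmult (cemb \<mu>1 b) \<mu>2)) = b"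
proof -
  obtain a0 a1 a2 a3 where \<mu>1: "\<mu>1 = Quat a0 a1 a2 a3" by (cases \<mu>1)
  obtain b0 b1 b2 b3 where \<mu>2: "\<mu>2 = Quat b0 b1 b2 b3" by (cases \<mu>2)
  from assms have "a0 = 0" "b0 = 0" "a1\<^sup>2 + a2\<^sup>2 + a3\<^sup>2 = 1" "b1\<^sup>2 + b2\<^sup>2 + b3\<^sup>2 = 1"
      "a1 * b1 + a2 * b2 + a3 * b3 = 0"
    by (simp_all add: \<mu>1 \<mu>2 pure_unit_def q_orth_def)
  then show ?thesis
    by (simp add: \<mu>1 \<mu>2 cd_snd_def qinner_def qadd_def qmult_def cemb_def qscale_def qone_def
        complex_eq_iff) algebra
qed

definition quat_of_vec :: "real \<times> real \<times> real \<times> real \<Rightarrow> quat" where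
  "quat_of_vec v = (case v of (a, b, c, d) \<Rightarrow> Quat a b c d)"

lemma quat_of_vec_qvec [simp]: "quat_of_vec (qvec p) = p"
  by (cases p) (simp add: quat_of_vec_def qvec_def)

lemma continuous_on_qmult_left: "continuous_on UNIV (\<lambda>v. qvec (qmult m (quat_of_vec v)))"
  unfolding qvec_def qmult_def quat_of_vec_def by (simp add: case_prod_beta, intro continuous_intros)

lemma continuous_on_cd_fst: "continuous_on UNIV (\<lambda>v. cd_fst \<mu>1 (quat_of_vec v))"
  unfolding cd_fst_def qinner_def quat_of_vec_def
  by (simp add: case_prod_beta Complex_eq, intro continuous_intros)

lemma continuous_on_cd_snd: "continuous_on UNIV (\<lambda>v. cd_snd \<mu>1 \<mu>2 (quat_of_vec v))"
  unfolding cd_snd_def qinner_def quat_of_vec_def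
  by (simp add: case_prod_beta Complex_eq, intro continuous_intros)

lemma integral_proper_mu1_eq:
  fixes g :: "real \<times> real \<times> real \<times> real \<Rightarrow> 'b::{banach, second_countable_topology}"
  assumes q: "(\<lambda>x. qvec (q x)) \<in> borel_measurable M" and "proper_mu1 M m q"
    and g: "g \<in> borel_measurable borel"
  shows "(\<integral>x. g (qvec (q x)) \<partial>M) = (\<integral>x. g (qvec (qmult m (q x))) \<partial>M)"
proof -
  have "(\<lambda>v. qvec (qmult m (quat_of_vec v))) \<in> borel_measurable borel"
    using continuous_on_qmult_left by (rule borel_measurable_continuous_onI)
  from measurable_comp[OF q this]
  have mq: "(\<lambda>x. qvec (qmult m (q x))) \<in> borel_measurable M" by (simp add: o_def)
  have "(\<integral>x. g (qvec (q x)) \<partial>M) = integral\<^sup>L (distr M borel (\<lambda>x. qvec (q x))) g"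
    by (rule integral_distr[OF q g, symmetric])
  also have "\<dots> = integral\<^sup>L (distr M borel (\<lambda>x. qvec (qmult m (q x)))) g"
    using \<open>proper_mu1 M m q\<close> by (simp add: proper_mu1_def)
  also have "\<dots> = (\<integral>x. g (qvec (qmult m (q x))) \<partial>M)"
    by (rule integral_distr[OF mq g])
  finally show ?thesis .
qed

text \<open>If left multiplication by \<open>m\<close> acts on \<open>F\<close> and \<open>G\<close> as multiplication by \<open>\<i>\<close>, it
  multiplies \<open>F q * G q\<close> by \<open>-1\<close> while preserving its distribution.\<close>
lemma integral_proper_mult_eq_0:
  assumes q: "(\<lambda>x. qvec (q x)) \<in> borel_measurable M" and pr: "proper_mu1 M m q"
    and F: "continuous_on UNIV (\<lambda>v. F (quat_of_vec v))" "\<And>p. F (qmult m p) = \<i> * F p"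
    and G: "continuous_on UNIV (\<lambda>v. G (quat_of_vec v))" "\<And>p. G (qmult m p) = \<i> * G p"
  shows "(\<integral>x. F (q x) * G (q x) \<partial>M) = 0"
proof -
  have "(\<lambda>v. F (quat_of_vec v) * G (quat_of_vec v)) \<in> borel_measurable borel"
    using F(1) G(1) by (intro borel_measurable_continuous_onI continuous_intros)
  from integral_proper_mu1_eq[OF q pr this]
  have "(\<integral>x. F (q x) * G (q x) \<partial>M) = (\<integral>x. - (F (q x) * G (q x)) \<partial>M)"
    by (simp add: F(2) G(2) algebra_simps)
  then show ?thesis by simp
qed

lemma augmented_second_moments:
  fixes z1 z2 :: "'a \<Rightarrow> complex"
  assumes "(\<integral>x. z1 x * z1 x \<partial>M) = 0" "(\<integral>x. z1 x * z2 x \<partial>M) = 0" "(\<integral>x. z2 x * z2 x \<partial>M) = 0"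
  shows "let qC = (\<lambda>x. [z1 x, cnj (z1 x), z2 x, cnj (z2 x)]);
             \<sigma>2 = complex_of_real (\<integral>x. (cmod (z1 x))\<^sup>2 \<partial>M);
             \<zeta>2 = complex_of_real (\<integral>x. (cmod (z2 x))\<^sup>2 \<partial>M);
             \<omega> = (\<integral>x. z1 x * cnj (z2 x) \<partial>M);
             R = [[\<sigma>2, 0, \<omega>, 0],
                  [0, \<sigma>2, 0, cnj \<omega>],
                  [cnj \<omega>, 0, \<zeta>2, 0],
                  [0, \<omega>, 0, \<zeta>2]]
         in \<forall>i<4. \<forall>j<4. (\<integral>x. qC x ! i * cnj (qC x ! j) \<partial>M) = R ! i ! j"
proof -
  have cnj_mult: "(\<integral>x. cnj (u x) * v x \<partial>M) = cnj (\<integral>x. u x * cnj (v x) \<partial>M)" for u v :: "'a \<Rightarrow> complex"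
    by (subst Bochner_Integration.integral_cnj[symmetric]) simp
  have norm: "(\<integral>x. u x * cnj (u x) \<partial>M) = complex_of_real (\<integral>x. (cmod (u x))\<^sup>2 \<partial>M)"
    for u :: "'a \<Rightarrow> complex"
    by (subst integral_complex_of_real[symmetric]) (simp only: complex_norm_square)
  have "(\<integral>x. z2 x * z1 x \<partial>M) = 0" "(\<integral>x. z2 x * cnj (z1 x) \<partial>M) = cnj (\<integral>x. z1 x * cnj (z2 x) \<partial>M)"
    using assms(2) by (simp_all add: mult.commute cnj_mult[symmetric])
  with assms show ?thesis
    unfolding Let_def
    by (simp add: less_Suc_eq numeral_eq_Suc cnj_mult norm del: integral_cnj)
qed

theorem mainTheorem4:
  fixes M :: "'a measure" and \<mu>1 \<mu>2 \<mu>3 :: quat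
    and q :: "'a \<Rightarrow> quat" and z1 z2 :: "'a \<Rightarrow> complex"
  assumes "prob_space M"
    and "pure_unit \<mu>1" and "pure_unit \<mu>2" and "q_orth \<mu>1 \<mu>2" and "\<mu>3 = qmult \<mu>1 \<mu>2"
    and "\<And>x. x \<in> space M \<Longrightarrow> q x = qadd (cemb \<mu>1 (z1 x)) (qmult (cemb \<mu>1 (z2 x)) \<mu>2)"
    and "quat_gaussian M q" and "quat_centered M q"
    and "proper_mu1 M \<mu>1 q"
  shows "let qC = (\<lambda>x. [z1 x, cnj (z1 x), z2 x, cnj (z2 x)]);
             \<sigma>2 = complex_of_real (\<integral>x. (cmod (z1 x))\<^sup>2 \<partial>M);
             \<zeta>2 = complex_of_real (\<integral>x. (cmod (z2 x))\<^sup>2 \<partial>M);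
             \<omega> = (\<integral>x. z1 x * cnj (z2 x) \<partial>M);
             R = [[\<sigma>2, 0, \<omega>, 0],
                  [0, \<sigma>2, 0, cnj \<omega>],
                  [cnj \<omega>, 0, \<zeta>2, 0],
                  [0, \<omega>, 0, \<zeta>2]]
         in \<forall>i<4. \<forall>j<4. (\<integral>x. qC x ! i * cnj (qC x ! j) \<partial>M) = R ! i ! j"
proof -
  have q: "(\<lambda>x. qvec (q x)) \<in> borel_measurable M"
    using \<open>quat_gaussian M q\<close> by (simp add: quat_gaussian_def)
  have \<mu>2_re: "qre \<mu>2 = 0" using \<open>pure_unit \<mu>2\<close> by (simp add: pure_unit_def)
  have z: "cd_fst \<mu>1 (q x) = z1 x" "cd_snd \<mu>1 \<mu>2 (q x) = z2 x" if "x \<in> space M" for x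
    using assms(6)[OF that] cd_fst_cemb[OF assms(2-4)] cd_snd_cemb[OF assms(2-4)] by simp_all
  note vanish = integral_proper_mult_eq_0[OF q \<open>proper_mu1 M \<mu>1 q\<close>]
  note fst = continuous_on_cd_fst cd_fst_qmult[OF \<open>pure_unit \<mu>1\<close>]
  note snd = continuous_on_cd_snd cd_snd_qmult[OF \<open>pure_unit \<mu>1\<close> \<mu>2_re \<open>q_orth \<mu>1 \<mu>2\<close>]
  have "(\<integral>x. z1 x * z1 x \<partial>M) = 0" "(\<integral>x. z1 x * z2 x \<partial>M) = 0" "(\<integral>x. z2 x * z2 x \<partial>M) = 0"
    using vanish[OF fst fst] vanish[OF fst snd] vanish[OF snd snd]
    by (simp_all add: z cong: Bochner_Integration.integral_cong)
  then show ?thesis by (rule augmented_second_moments)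
qed

end
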